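(* For all $n\in\mathbf N$ and integers $m$ with $0\le m\le n-1$, $$\left\langle{n\atop m}\right\rangle=\left\langle{n-1\atop m}\right\rangle^{(1,0)} .$$
   Context: Euler numbers: $\left\langle{0\atop 0}\right\rangle=1$, $\left\langle{n\atop k}\right\rangle=0$ for $k<0$ or $k>n$, $\left\langle{n\atop k}\right\rangle=(n-k)\left\langle{n-1\atop k-1}\right\rangle+(k+1)\left\langle{n-1\atop k}\right\rangle$. For sequences $a=(a_j)_{j\ge1}$, $b=(b_j)_{j\ge0}$ and $\omega=(\varepsilon_1,\dots,\varepsilon_N)\in\{0,1\}^N$ let $w^{a,b}_N(\omega)=\prod_{t=1}^N g_t$ where, with $j=\#\{l<t:\varepsilon_l=0\}$, $g_t=a_{t-j}$ if $\varepsilon_t=0$ and $g_t=b_j$ if $\varepsilon_t=1$; let $\zeta_{Nk}(a,b)=\sum w^{a,b}_N(\omega)$ over $\omega$ with exactly $k$ zeros ($N\ge1$, $0\le k\le N$), $\zeta_{00}=1$, $\zeta_{Nk}=0$ if $k<0$ or $k>N$. For integers $0\le\mu\le\nu$, the associated Euler numbers of rank $(\nu,\mu)$ are $\left\langle{N\atop k}\right\rangle^{(\nu,\mu)}=\zeta_{Nk}(a,b)$ with $a_j=\nu-\mu+j-1$ $(j\ge1)$ and $b_j=\mu+j+1$ $(j\ge0)$ (i.e. the sequences $\alpha_l=l-1$, $\beta_j=j+1$ shifted by $\nu-\mu$ and $\mu$ respectively). *)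

theory Defs
  imports Main
begin

fun eulerian :: "nat \<Rightarrow> int \<Rightarrow> int" where
  "eulerian 0 k = (if k = 0 then 1 else 0)"
| "eulerian (Suc n) k =
     (if k < 0 \<or> k > int (Suc n) then 0
      else (int (Suc n) - k) * eulerian n (k - 1) + (k + 1) * eulerian n k)"

text \<open>Words omega in {0,1}^N are lists of naturals with entries in {0,1}; list position t
  (0-based) corresponds to index t+1 in the paper.  j = number of zeros strictly before.\<close>
definition zeros_before :: "nat list \<Rightarrow> nat \<Rightarrow> nat" where
  "zeros_before \<omega> t = card {l. l < t \<and> \<omega> ! l = 0}"

definition weight :: "(nat \<Rightarrow> int) \<Rightarrow> (nat \<Rightarrow> int) \<Rightarrow> nat list \<Rightarrow> int" where
  "weight a b \<omega> = (\<Prod>t < length \<omega>.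
      if \<omega> ! t = 0 then a (t + 1 - zeros_before \<omega> t) else b (zeros_before \<omega> t))"

definition zeta :: "(nat \<Rightarrow> int) \<Rightarrow> (nat \<Rightarrow> int) \<Rightarrow> nat \<Rightarrow> int \<Rightarrow> int" where
  "zeta a b N k =
     (if N = 0 then (if k = 0 then 1 else 0)
      else if k < 0 \<or> k > int N then 0
      else \<Sum>\<omega> \<in> {\<omega>. length \<omega> = N \<and> set \<omega> \<subseteq> {0, 1}
                     \<and> int (length (filter (\<lambda>e. e = 0) \<omega>)) = k}. weight a b \<omega>)"

definition assoc_eulerian :: "nat \<Rightarrow> nat \<Rightarrow> nat \<Rightarrow> int \<Rightarrow> int" where
  "assoc_eulerian \<nu> \<mu> N k =
     zeta (\<lambda>j. int \<nu> - int \<mu> + int j - 1) (\<lambda>j. int \<mu> + int j + 1) N k"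

end

theory Submission
  imports Defs
begin

text \<open>Splitting a word of length N+1 by its last letter gives the recurrence
  \<zeta>(N+1,k) = a(N+2-k) \<zeta>(N,k-1) + b(k) \<zeta>(N,k) for arbitrary weight sequences a, b.
  For rank (1,0), i.e. a(j) = j and b(j) = j+1, this is exactly the Eulerian recurrence
  shifted by one, and both families start from the same initial values.\<close>

definition binary_words :: "nat \<Rightarrow> int \<Rightarrow> nat list set" where
  "binary_words N k = {\<omega>. length \<omega> = N \<and> set \<omega> \<subseteq> {0, 1}
                          \<and> int (length (filter (\<lambda>e. e = 0) \<omega>)) = k}"

lemma finite_binary_words: "finite (binary_words N k)"
proof (rule finite_subset)
  show "binary_words N k \<subseteq> {\<omega>. set \<omega> \<subseteq> {0, 1} \<and> length \<omega> = N}"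
    by (auto simp: binary_words_def)
  show "finite {\<omega>. set \<omega> \<subseteq> {0::nat, 1} \<and> length \<omega> = N}"
    by (rule finite_lists_length_eq) simp
qed

lemma binary_words_0: "binary_words 0 k = (if k = 0 then {[]} else {})"
  by (auto simp: binary_words_def)

lemma binary_words_eq_empty:
  assumes "k < 0 \<or> k > int N"
  shows "binary_words N k = {}"
proof -
  have "0 \<le> k \<and> k \<le> int N" if "\<omega> \<in> binary_words N k" for \<omega>
    using that length_filter_le[of "\<lambda>e. e = 0" \<omega>] by (auto simp: binary_words_def)
  with assms show ?thesis
    by fastforce
qed

lemma binary_words_Suc:
  "binary_words (Suc N) k =
     (\<lambda>\<omega>. \<omega> @ [0]) ` binary_words N (k - 1) \<union> (\<lambda>\<omega>. \<omega> @ [1]) ` binary_words N k"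
proof (intro set_eqI iffI)
  fix \<omega> assume \<omega>: "\<omega> \<in> binary_words (Suc N) k"
  then have "length \<omega> = Suc N"
    by (simp add: binary_words_def)
  then obtain v x where v: "\<omega> = v @ [x]"
    by (metis length_Suc_conv_rev)
  with \<omega> consider "x = 0" "v \<in> binary_words N (k - 1)" | "x = 1" "v \<in> binary_words N k"
    by (auto simp: binary_words_def)
  then show "\<omega> \<in> (\<lambda>\<omega>. \<omega> @ [0]) ` binary_words N (k - 1) \<union> (\<lambda>\<omega>. \<omega> @ [1]) ` binary_words N k"
    using v by cases auto
qed (auto simp: binary_words_def)

lemma zeta_eq_sum_weight: "zeta a b N k = (\<Sum>\<omega> \<in> binary_words N k. weight a b \<omega>)"
  by (simp add: zeta_def binary_words_0 weight_def binary_words_eq_empty)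
    (simp add: binary_words_def)

lemma zeta_eq_0: "k < 0 \<or> k > int N \<Longrightarrow> zeta a b N k = 0"
  by (simp add: zeta_eq_sum_weight binary_words_eq_empty)

lemma zeros_before_append:
  "t \<le> length \<omega> \<Longrightarrow> zeros_before (\<omega> @ v) t = zeros_before \<omega> t"
  unfolding zeros_before_def by (rule arg_cong[where f = card]) (auto simp: nth_append)

lemma zeros_before_length: "zeros_before \<omega> (length \<omega>) = length (filter (\<lambda>e. e = 0) \<omega>)"
  unfolding zeros_before_def by (simp add: length_filter_conv_card)

lemma weight_snoc:
  "weight a b (\<omega> @ [x]) = weight a b \<omega> *
     (if x = 0 then a (length \<omega> + 1 - length (filter (\<lambda>e. e = 0) \<omega>))
      else b (length (filter (\<lambda>e. e = 0) \<omega>)))"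
proof -
  have "(\<Prod>t < length \<omega>. if (\<omega> @ [x]) ! t = 0
          then a (t + 1 - zeros_before (\<omega> @ [x]) t) else b (zeros_before (\<omega> @ [x]) t))
        = weight a b \<omega>"
    unfolding weight_def by (rule prod.cong) (auto simp: nth_append zeros_before_append)
  then show ?thesis
    by (simp add: weight_def lessThan_Suc zeros_before_append zeros_before_length)
qed

lemma zeta_Suc:
  "zeta a b (Suc N) k = a (nat (int N + 2 - k)) * zeta a b N (k - 1) + b (nat k) * zeta a b N k"
proof -
  have inj_snoc: "inj_on (\<lambda>\<omega>. \<omega> @ [x]) A" for x :: nat and A
    by (rule inj_onI) simp
  have split: "zeta a b (Suc N) k = (\<Sum>\<omega> \<in> binary_words N (k - 1). weight a b (\<omega> @ [0]))
                                   + (\<Sum>\<omega> \<in> binary_words N k. weight a b (\<omega> @ [1]))"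
    unfolding zeta_eq_sum_weight binary_words_Suc
    by (subst sum.union_disjoint)
      (auto simp: finite_binary_words sum.reindex[OF inj_snoc])
  have "(\<Sum>\<omega> \<in> binary_words N (k - 1). weight a b (\<omega> @ [0]))
        = a (nat (int N + 2 - k)) * zeta a b N (k - 1)"
    unfolding zeta_eq_sum_weight sum_distrib_left
  proof (rule sum.cong)
    fix \<omega> assume "\<omega> \<in> binary_words N (k - 1)"
    moreover have "length (filter (\<lambda>e. e = 0) \<omega>) \<le> length \<omega>"
      by (rule length_filter_le)
    ultimately have "length \<omega> + 1 - length (filter (\<lambda>e. e = 0) \<omega>) = nat (int N + 2 - k)"
      by (auto simp: binary_words_def)
    then show "weight a b (\<omega> @ [0]) = a (nat (int N + 2 - k)) * weight a b \<omega>"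
      by (simp add: weight_snoc)
  qed simp
  moreover have "(\<Sum>\<omega> \<in> binary_words N k. weight a b (\<omega> @ [1])) = b (nat k) * zeta a b N k"
    unfolding zeta_eq_sum_weight sum_distrib_left
    by (rule sum.cong) (auto simp: binary_words_def weight_snoc)
  ultimately show ?thesis
    using split by simp
qed

lemma assoc_eulerian_Suc:
  "assoc_eulerian \<nu> \<mu> (Suc N) k =
     (int \<nu> - int \<mu> + int N + 1 - k) * assoc_eulerian \<nu> \<mu> N (k - 1)
     + (int \<mu> + k + 1) * assoc_eulerian \<nu> \<mu> N k"
  unfolding assoc_eulerian_def zeta_Suc
  by (cases "k < 0 \<or> k > int N + 1") (auto simp: zeta_eq_0)

lemma eulerian_eq_0: "k < 0 \<or> k > int n \<Longrightarrow> eulerian n k = 0"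
  by (cases n) auto

lemma eulerian_Suc:
  "eulerian (Suc n) k = (int (Suc n) - k) * eulerian n (k - 1) + (k + 1) * eulerian n k"
  by (cases "k < 0 \<or> k > int (Suc n)") (auto simp: eulerian_eq_0)

lemma eulerian_Suc_eq_assoc_eulerian: "eulerian (Suc N) k = assoc_eulerian 1 0 N k"
proof (induction N arbitrary: k)
  case 0
  show ?case
    by (simp add: assoc_eulerian_def zeta_def)
next
  case (Suc N)
  show ?case
    unfolding eulerian_Suc[of "Suc N"] assoc_eulerian_Suc Suc.IH
    by (simp add: algebra_simps)
qed

theorem mainTheorem14:
  fixes n :: nat and m :: int
  assumes "0 \<le> m" and "m \<le> int n - 1"
  shows "eulerian n m = assoc_eulerian 1 0 (n - 1) m"
proof -
  from assms obtain N where "n = Suc N"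
    by (cases n) auto
  then show ?thesis
    by (simp del: eulerian.simps add: eulerian_Suc_eq_assoc_eulerian)
qed

end
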